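(* Let $N_k=N\cup\{\Gamma\rightarrow E_1,\dots,E_n\}$ and $N_{k+1}=N\cup\{\Gamma\rightarrow E_i\}$ (a Horn transformation, $n>1$). Let $N^\bot_{k+1}$ be a conflicting core of $N_{k+1}$, and let $(\Gamma\rightarrow E_i)\sigma_j$, $1\le j\le m$, be the clauses of $N^\bot_{k+1}$ that are instances of $\Gamma\rightarrow E_i$ (taken as the replaced ones). Suppose that for each $j$ there are a substitution $\sigma'_j$, a subset $N^j_k\subseteq N_k$ and a substitution $\tau_j$ such that for every grounding substitution $\theta$, $N^j_k\tau_j\theta\cup\{(\Gamma\rightarrow E_1,\dots,E_n)\sigma'_j\theta\}\models(\Gamma\rightarrow E_i)\sigma_j\theta$. Then $$\big(N^\bot_{k+1}\setminus\{(\Gamma\rightarrow E_i)\sigma_j\mid 1\le j\le m\}\big)\cup\{(\Gamma\rightarrow E_1,\dots,E_n)\sigma'_j\mid 1\le j\le m\}\cup\bigcup_j N^j_k\tau_j$$ is a conflicting core of $N_k$.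
   Context: First-order logic without equality. A clause is a finite multiset of literals written $\Gamma \rightarrow \Delta$. A Herbrand interpretation is a set of ground atoms; $I \models \Gamma\rightarrow\Delta$ iff for every grounding substitution $\sigma$, $\Delta\sigma\cap I\neq\emptyset$ or $\Gamma\sigma\not\subseteq I$; for ground clause sets, $M\models D$ means every model of $M$ satisfies $D$. A finite clause set $N^\bot$ is a conflicting core if for every substitution $\tau$ grounding all of $N^\bot$ (one substitution for the whole set, so variables are shared among clauses) the set $N^\bot\tau$ is unsatisfiable. $N^\bot$ is a conflicting core of $N$ if moreover every $C\in N^\bot$ equals $C'\sigma$ for some $C'\in N$ and substitution $\sigma$. *)

theory Defs
  imports "HOL-Library.Multiset"
begin

datatype ('f, 'v) fterm = Var 'v | Fun 'f "('f, 'v) fterm list"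

type_synonym ('p, 'f, 'v) atom = "'p \<times> ('f, 'v) fterm list"

text \<open>A clause \<open>\<Gamma> \<rightarrow> \<Delta>\<close>: a pair of finite multisets of atoms
  (antecedent, succedent).\<close>
type_synonym ('p, 'f, 'v) clause = "('p, 'f, 'v) atom multiset \<times> ('p, 'f, 'v) atom multiset"

type_synonym ('f, 'v) subst = "'v \<Rightarrow> ('f, 'v) fterm"

fun subst_term :: "('f, 'v) fterm \<Rightarrow> ('f, 'v) subst \<Rightarrow> ('f, 'v) fterm" where
  "subst_term (Var x) \<sigma> = \<sigma> x"
| "subst_term (Fun f ts) \<sigma> = Fun f (map (\<lambda>t. subst_term t \<sigma>) ts)"

definition subst_atom :: "('p, 'f, 'v) atom \<Rightarrow> ('f, 'v) subst \<Rightarrow> ('p, 'f, 'v) atom" where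
  "subst_atom A \<sigma> = (fst A, map (\<lambda>t. subst_term t \<sigma>) (snd A))"

definition subst_cls :: "('p, 'f, 'v) clause \<Rightarrow> ('f, 'v) subst \<Rightarrow> ('p, 'f, 'v) clause" where
  "subst_cls C \<sigma> = (image_mset (\<lambda>A. subst_atom A \<sigma>) (fst C), image_mset (\<lambda>A. subst_atom A \<sigma>) (snd C))"

definition subst_cls_set :: "('p, 'f, 'v) clause set \<Rightarrow> ('f, 'v) subst \<Rightarrow> ('p, 'f, 'v) clause set" where
  "subst_cls_set N \<sigma> = (\<lambda>C. subst_cls C \<sigma>) ` N"

fun ground_term :: "('f, 'v) fterm \<Rightarrow> bool" where
  "ground_term (Var x) = False"
| "ground_term (Fun f ts) = (\<forall>t \<in> set ts. ground_term t)"

definition ground_atom :: "('p, 'f, 'v) atom \<Rightarrow> bool" where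
  "ground_atom A = (\<forall>t \<in> set (snd A). ground_term t)"

definition ground_cls :: "('p, 'f, 'v) clause \<Rightarrow> bool" where
  "ground_cls C = (\<forall>A \<in># fst C + snd C. ground_atom A)"

definition grounding_set :: "('f, 'v) subst \<Rightarrow> ('p, 'f, 'v) clause set \<Rightarrow> bool" where
  "grounding_set \<sigma> N = (\<forall>C \<in> N. ground_cls (subst_cls C \<sigma>))"

definition herbrand_interp :: "('p, 'f, 'v) atom set \<Rightarrow> bool" where
  "herbrand_interp I = (\<forall>A \<in> I. ground_atom A)"

definition true_cls :: "('p, 'f, 'v) atom set \<Rightarrow> ('p, 'f, 'v) clause \<Rightarrow> bool" where
  "true_cls I C = (\<forall>\<sigma>. ground_cls (subst_cls C \<sigma>) \<longrightarrow>
      (set_mset (snd (subst_cls C \<sigma>)) \<inter> I \<noteq> {} \<or> \<not> set_mset (fst (subst_cls C \<sigma>)) \<subseteq> I))"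

definition true_cls_set :: "('p, 'f, 'v) atom set \<Rightarrow> ('p, 'f, 'v) clause set \<Rightarrow> bool" where
  "true_cls_set I N = (\<forall>C \<in> N. true_cls I C)"

definition satisfiable :: "('p, 'f, 'v) clause set \<Rightarrow> bool" where
  "satisfiable N = (\<exists>I. herbrand_interp I \<and> true_cls_set I N)"

definition entails :: "('p, 'f, 'v) clause set \<Rightarrow> ('p, 'f, 'v) clause \<Rightarrow> bool" where
  "entails M D = (\<forall>I. herbrand_interp I \<longrightarrow> true_cls_set I M \<longrightarrow> true_cls I D)"

definition conflicting_core :: "('p, 'f, 'v) clause set \<Rightarrow> bool" where
  "conflicting_core Nb = (finite Nb \<and>
     (\<forall>\<tau>. grounding_set \<tau> Nb \<longrightarrow> \<not> satisfiable (subst_cls_set Nb \<tau>)))"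

definition conflicting_core_of :: "('p, 'f, 'v) clause set \<Rightarrow> ('p, 'f, 'v) clause set \<Rightarrow> bool" where
  "conflicting_core_of Nb N = (conflicting_core Nb \<and>
     (\<forall>C \<in> Nb. \<exists>C' \<in> N. \<exists>\<sigma>. C = subst_cls C' \<sigma>))"

end

theory Submission
  imports Defs
begin

text \<open>Every Herbrand model of the new clause set, under a substitution grounding both sets, is
  also a model of the old core: clauses kept from the old core are present verbatim, and each
  replaced instance of \<open>\<Gamma> \<rightarrow> E\<^sub>i\<close> is entailed by the clauses added for it. Since a substitution
  grounding only the new set can be completed to one grounding everything without changing the
  new ground instances, unsatisfiability transfers from the old core to the new one.\<close>

definition groundify :: "('f, 'v) subst \<Rightarrow> ('f, 'v) subst" where
  "groundify \<tau> = (\<lambda>x. if ground_term (\<tau> x) then \<tau> x else Fun undefined [])"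

lemma ground_subst_term_groundify: "ground_term (subst_term t (groundify \<tau>))"
  by (induction t) (auto simp: groundify_def)

lemma subst_term_groundify:
  "ground_term (subst_term t \<tau>) \<Longrightarrow> subst_term t (groundify \<tau>) = subst_term t \<tau>"
  by (induction t) (auto simp: groundify_def)

lemma grounding_set_groundify: "grounding_set (groundify \<tau>) N"
  by (auto simp: grounding_set_def ground_cls_def subst_cls_def ground_atom_def subst_atom_def
      ground_subst_term_groundify)

lemma subst_atom_groundify:
  "ground_atom (subst_atom A \<tau>) \<Longrightarrow> subst_atom A (groundify \<tau>) = subst_atom A \<tau>"
  by (auto simp: ground_atom_def subst_atom_def subst_term_groundify)

lemma subst_cls_groundify:
  "ground_cls (subst_cls C \<tau>) \<Longrightarrow> subst_cls C (groundify \<tau>) = subst_cls C \<tau>"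
  unfolding subst_cls_def ground_cls_def
  by (auto intro!: image_mset_cong subst_atom_groundify)

lemma subst_cls_set_groundify:
  "grounding_set \<tau> N \<Longrightarrow> subst_cls_set N (groundify \<tau>) = subst_cls_set N \<tau>"
  by (auto simp: subst_cls_set_def grounding_set_def subst_cls_groundify)

lemma true_cls_set_mono:
  "true_cls_set I (subst_cls_set M \<theta>) \<Longrightarrow> M' \<subseteq> M \<Longrightarrow> true_cls_set I (subst_cls_set M' \<theta>)"
  by (auto simp: true_cls_set_def subst_cls_set_def)

lemma true_cls_if_entailed_by_subset:
  assumes "entails (subst_cls_set S \<theta>) D" "S \<subseteq> M"
    and "herbrand_interp I" "true_cls_set I (subst_cls_set M \<theta>)"
  shows "true_cls I D"
  using assms true_cls_set_mono unfolding entails_def by blast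

lemma conflicting_core_if_models_satisfy_core:
  assumes core: "conflicting_core Nb" and fin: "finite M"
    and models: "\<And>\<theta> I. grounding_set \<theta> (Nb \<union> M) \<Longrightarrow> herbrand_interp I \<Longrightarrow>
        true_cls_set I (subst_cls_set M \<theta>) \<Longrightarrow> true_cls_set I (subst_cls_set Nb \<theta>)"
  shows "conflicting_core M"
  unfolding conflicting_core_def
proof (intro conjI fin allI impI notI)
  fix \<tau> assume "grounding_set \<tau> M" and "satisfiable (subst_cls_set M \<tau>)"
  then obtain I where I: "herbrand_interp I" "true_cls_set I (subst_cls_set M (groundify \<tau>))"
    by (auto simp: satisfiable_def subst_cls_set_groundify)
  have "true_cls_set I (subst_cls_set Nb (groundify \<tau>))"
    using models[OF grounding_set_groundify I] .
  with I(1) have "satisfiable (subst_cls_set Nb (groundify \<tau>))"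
    by (auto simp: satisfiable_def)
  with core show False
    by (simp add: conflicting_core_def grounding_set_groundify)
qed

theorem lemma5:
  fixes N :: "('p, 'f, 'v) clause set"
    and \<Gamma> :: "('p, 'f, 'v) atom multiset"
    and Es :: "('p, 'f, 'v) atom list"
    and i m :: nat
    and Nbot :: "('p, 'f, 'v) clause set"
    and \<sigma> \<sigma>' \<tau> :: "nat \<Rightarrow> ('f, 'v) subst"
    and Nj :: "nat \<Rightarrow> ('p, 'f, 'v) clause set"
  assumes n_gt1: "length Es > 1"
    and i_range: "i < length Es"
    and core: "conflicting_core_of Nbot (N \<union> {(\<Gamma>, {#Es ! i#})})"
    and replaced: "{subst_cls (\<Gamma>, {#Es ! i#}) (\<sigma> j) | j. j < m}
                   = {C \<in> Nbot. \<exists>\<rho>. C = subst_cls (\<Gamma>, {#Es ! i#}) \<rho>}"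
    and Nj_sub: "\<forall>j < m. Nj j \<subseteq> N \<union> {(\<Gamma>, mset Es)}"
    and Nj_fin: "\<forall>j < m. finite (Nj j)"
    and entail: "\<forall>j < m. \<forall>\<theta>.
        grounding_set \<theta> (subst_cls_set (Nj j) (\<tau> j) \<union> {subst_cls (\<Gamma>, mset Es) (\<sigma>' j),
                                                       subst_cls (\<Gamma>, {#Es ! i#}) (\<sigma> j)}) \<longrightarrow>
        entails (subst_cls_set (subst_cls_set (Nj j) (\<tau> j)) \<theta> \<union>
                   {subst_cls (subst_cls (\<Gamma>, mset Es) (\<sigma>' j)) \<theta>})
                (subst_cls (subst_cls (\<Gamma>, {#Es ! i#}) (\<sigma> j)) \<theta>)"
  shows "conflicting_core_of
           ((Nbot - {subst_cls (\<Gamma>, {#Es ! i#}) (\<sigma> j) | j. j < m})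
            \<union> {subst_cls (\<Gamma>, mset Es) (\<sigma>' j) | j. j < m}
            \<union> (\<Union>j < m. subst_cls_set (Nj j) (\<tau> j)))
           (N \<union> {(\<Gamma>, mset Es)})"
proof -
  let ?C = "(\<Gamma>, {#Es ! i#})" and ?E = "(\<Gamma>, mset Es)"
  let ?R = "{subst_cls ?C (\<sigma> j) | j. j < m}"
  let ?M = "(Nbot - ?R) \<union> {subst_cls ?E (\<sigma>' j) | j. j < m} \<union> (\<Union>j < m. subst_cls_set (Nj j) (\<tau> j))"
  have "conflicting_core ?M"
  proof (rule conflicting_core_if_models_satisfy_core)
    show "conflicting_core Nbot" using core by (simp add: conflicting_core_of_def)
    have "{subst_cls ?E (\<sigma>' j) | j. j < m} = (\<lambda>j. subst_cls ?E (\<sigma>' j)) ` {..<m}" by auto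
    then show "finite ?M"
      using core Nj_fin by (auto simp: conflicting_core_of_def conflicting_core_def subst_cls_set_def)
  next
    fix \<theta> I assume ground: "grounding_set \<theta> (Nbot \<union> ?M)" and I: "herbrand_interp I"
      and model: "true_cls_set I (subst_cls_set ?M \<theta>)"
    have "true_cls I (subst_cls (subst_cls ?C (\<sigma> j)) \<theta>)" if j: "j < m" for j
    proof (rule true_cls_if_entailed_by_subset[OF _ _ I model])
      have "subst_cls ?C (\<sigma> j) \<in> Nbot" using j replaced by blast
      with j ground have "grounding_set \<theta>
          (subst_cls_set (Nj j) (\<tau> j) \<union> {subst_cls ?E (\<sigma>' j), subst_cls ?C (\<sigma> j)})"
        unfolding grounding_set_def by blast
      with j entail show "entails (subst_cls_set (subst_cls_set (Nj j) (\<tau> j) \<union> {subst_cls ?E (\<sigma>' j)}) \<theta>)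
          (subst_cls (subst_cls ?C (\<sigma> j)) \<theta>)"
        by (simp add: subst_cls_set_def image_Un)
      show "subst_cls_set (Nj j) (\<tau> j) \<union> {subst_cls ?E (\<sigma>' j)} \<subseteq> ?M" using j by blast
    qed
    moreover have "true_cls_set I (subst_cls_set (Nbot - ?R) \<theta>)"
      by (rule true_cls_set_mono[OF model]) blast
    ultimately show "true_cls_set I (subst_cls_set Nbot \<theta>)"
      by (auto simp: true_cls_set_def subst_cls_set_def)
  qed
  moreover have "\<forall>C \<in> ?M. \<exists>C' \<in> N \<union> {?E}. \<exists>\<sigma>. C = subst_cls C' \<sigma>"
    using core replaced Nj_sub unfolding conflicting_core_of_def subst_cls_set_def by blast
  ultimately show ?thesis by (simp add: conflicting_core_of_def)
qed

end
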